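(* Let $t\in[0,1]$, $\ell\in\{1,\dots,L\}$, and $\mathbf x_t\in\mathsf X$ with $p_t(\mathbf x_t)>0$. Then for every $\mathbf y\in\mathsf X$ with $\mathbf y^{-\ell}=\mathbf x_t^{-\ell}$, $$\frac{p_t(\mathbf y)}{p_t(\mathbf x_t)}=\frac{q^\ell_{t|0}\big(\mathbf y^\ell\mid\hat{\mathbf x}^{\mathrm{loo}}_0(\mathbf x_t,t)^\ell\big)}{q^\ell_{t|0}\big(\mathbf x_t^\ell\mid\hat{\mathbf x}^{\mathrm{loo}}_0(\mathbf x_t,t)^\ell\big)}.$$
   Context: **Setup.** - Let $K\ge2$, $L\ge1$ and $\mathsf V=\{1,\dots,K\}$. Tokens are identified with the standard basis vectors of $\mathbb R^K$. - $\Delta_K$ is the probability simplex. - $\mathsf X=\mathsf V^L$. For $\mathbf x\in\mathsf X$, $\mathbf x^\ell$ is its $\ell$-th token and $\mathbf x^{-\ell}$ denotes the other tokens. - $p_0$ is a distribution on $\mathsf X$. - The noise schedule $\alpha:[0,1]\to[0,1]$ is nonincreasing with $\alpha_0=1$. - For each $\ell$ fix $\pi^\ell\in\Delta_K$. The forward token kernel is $q^\ell_{t|0}(x\mid\nu)=\langle x,\alpha_t\nu+(1-\alpha_t)\pi^\ell\rangle$, defined for $\nu\in\Delta_K$ (in particular for one-hot $\nu$). - The sequence-level kernel is the product over positions. - $X_0\sim p_0$ and $X_t\mid X_0\sim q_{t|0}(\cdot\mid X_0)$. $p_t$ is the law of $X_t$. **Leave-one-out mean.** - $\hat{\mathbf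 x}^{\mathrm{loo}}_0(\mathbf x_t,t)^\ell:=\mathbb E[X_0^\ell\mid X_t^{-\ell}=\mathbf x_t^{-\ell}]\in\Delta_K$. *)

theory Defs
  imports Complex_Main "HOL-Library.FuncSet"
begin

text \<open>Tokens are 1..K; a token x is identified with the basis vector e_x, so
  the pairing of x with nu is nu x. Sequences are extensional functions on
  positions 1..L with values in 1..K.\<close>

definition seqs :: "nat \<Rightarrow> nat \<Rightarrow> (nat \<Rightarrow> nat) set" where
  "seqs K L = PiE {1..L} (\<lambda>_. {1..K})"

definition onehot :: "nat \<Rightarrow> nat \<Rightarrow> real" where
  "onehot k = (\<lambda>j. if j = k then 1 else 0)"

definition q_tok :: "(real \<Rightarrow> real) \<Rightarrow> (nat \<Rightarrow> nat \<Rightarrow> real) \<Rightarrow> real \<Rightarrow> nat \<Rightarrow> nat \<Rightarrow> (nat \<Rightarrow> real) \<Rightarrow> real" where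
  "q_tok \<alpha> \<pi> t l x \<nu> = \<alpha> t * \<nu> x + (1 - \<alpha> t) * \<pi> l x"

definition q_seq :: "nat \<Rightarrow> (real \<Rightarrow> real) \<Rightarrow> (nat \<Rightarrow> nat \<Rightarrow> real) \<Rightarrow> real \<Rightarrow> (nat \<Rightarrow> nat) \<Rightarrow> (nat \<Rightarrow> nat) \<Rightarrow> real" where
  "q_seq L \<alpha> \<pi> t x0 x = (\<Prod>l\<in>{1..L}. q_tok \<alpha> \<pi> t l (x l) (onehot (x0 l)))"

definition p_t :: "nat \<Rightarrow> nat \<Rightarrow> ((nat \<Rightarrow> nat) \<Rightarrow> real) \<Rightarrow> (real \<Rightarrow> real) \<Rightarrow> (nat \<Rightarrow> nat \<Rightarrow> real) \<Rightarrow> real \<Rightarrow> (nat \<Rightarrow> nat) \<Rightarrow> real" where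
  "p_t K L p0 \<alpha> \<pi> t x = (\<Sum>x0\<in>seqs K L. p0 x0 * q_seq L \<alpha> \<pi> t x0 x)"

text \<open>Leave-one-out mean: E[X_0^l | X_t^{-l} = x^{-l}], computed from the joint law
  P(X_0 = x0, X_t = y) = p0 x0 * q_seq x0 y, as a vector indexed by tokens.\<close>
definition loo :: "nat \<Rightarrow> nat \<Rightarrow> ((nat \<Rightarrow> nat) \<Rightarrow> real) \<Rightarrow> (real \<Rightarrow> real) \<Rightarrow> (nat \<Rightarrow> nat \<Rightarrow> real) \<Rightarrow> real \<Rightarrow> (nat \<Rightarrow> nat) \<Rightarrow> nat \<Rightarrow> nat \<Rightarrow> real" where
  "loo K L p0 \<alpha> \<pi> t x l =
     (\<lambda>k. (\<Sum>x0\<in>seqs K L. \<Sum>y\<in>{y\<in>seqs K L. \<forall>j\<in>{1..L}-{l}. y j = x j}.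
              p0 x0 * q_seq L \<alpha> \<pi> t x0 y * onehot (x0 l) k)
          / (\<Sum>x0\<in>seqs K L. \<Sum>y\<in>{y\<in>seqs K L. \<forall>j\<in>{1..L}-{l}. y j = x j}.
              p0 x0 * q_seq L \<alpha> \<pi> t x0 y))"

end

theory Submission
  imports Defs
begin

text \<open>For every y that agrees with x off position l, the forward kernel
  factors as q(y | x0) = q^l(y^l | e_{x0^l}) R(x0), where R(x0) collects the factors of the
  positions j \<noteq> l and depends only on x^{-l}. Hence p_t(y) is a mixture of the kernels
  q^l(y^l | e_{x0^l}) with weights p0(x0) R(x0). Since q^l(y^l | \<nu>) is affine in \<nu>, this
  mixture equals W q^l(y^l | \<nu>*) with W the total weight and \<nu>* the weighted mean of the
  e_{x0^l}. Summing q(y | x0) over y^l gives R(x0), so \<nu>* is exactly the leave-one-out mean,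
  and W cancels in the ratio (W > 0 because p_t(x) > 0).\<close>

lemma finite_seqs: "finite (seqs K L)"
  unfolding seqs_def by (intro finite_PiE) auto

definition q_seq_except ::
    "nat \<Rightarrow> (real \<Rightarrow> real) \<Rightarrow> (nat \<Rightarrow> nat \<Rightarrow> real) \<Rightarrow> real \<Rightarrow> nat \<Rightarrow> (nat \<Rightarrow> nat) \<Rightarrow> (nat \<Rightarrow> nat) \<Rightarrow> real"
  where "q_seq_except L \<alpha> \<pi> t l x0 x = (\<Prod>j\<in>{1..L}-{l}. q_tok \<alpha> \<pi> t j (x j) (onehot (x0 j)))"

lemma q_seq_split:
  assumes "l \<in> {1..L}" and "\<forall>j\<in>{1..L}-{l}. z j = x j"
  shows "q_seq L \<alpha> \<pi> t x0 z = q_tok \<alpha> \<pi> t l (z l) (onehot (x0 l)) * q_seq_except L \<alpha> \<pi> t l x0 x"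
proof -
  have "q_seq L \<alpha> \<pi> t x0 z
      = q_tok \<alpha> \<pi> t l (z l) (onehot (x0 l)) * (\<Prod>j\<in>{1..L}-{l}. q_tok \<alpha> \<pi> t j (z j) (onehot (x0 j)))"
    unfolding q_seq_def using assms(1) by (simp add: prod.remove)
  also have "(\<Prod>j\<in>{1..L}-{l}. q_tok \<alpha> \<pi> t j (z j) (onehot (x0 j))) = q_seq_except L \<alpha> \<pi> t l x0 x"
    unfolding q_seq_except_def using assms(2) by (intro prod.cong) auto
  finally show ?thesis .
qed

lemma q_tok_onehot_nonneg:
  assumes "0 \<le> \<alpha> t" and "\<alpha> t \<le> 1" and "0 \<le> \<pi> l k"
  shows "0 \<le> q_tok \<alpha> \<pi> t l k (onehot c)"
  using assms unfolding q_tok_def onehot_def by simp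

lemma q_seq_except_nonneg:
  assumes "0 \<le> \<alpha> t" and "\<alpha> t \<le> 1" and "\<forall>j\<in>{1..L}-{l}. 0 \<le> \<pi> j (x j)"
  shows "0 \<le> q_seq_except L \<alpha> \<pi> t l x0 x"
  unfolding q_seq_except_def using assms by (intro prod_nonneg q_tok_onehot_nonneg) auto

lemma sum_q_tok_onehot:
  assumes "c \<in> {1..K}" and "(\<Sum>k\<in>{1..K}. \<pi> l k) = 1"
  shows "(\<Sum>k\<in>{1..K}. q_tok \<alpha> \<pi> t l k (onehot c)) = 1"
proof -
  have "(\<Sum>k\<in>{1..K}. onehot c k) = 1"
    unfolding onehot_def using assms(1) by simp
  with assms(2) show ?thesis
    unfolding q_tok_def by (simp add: sum.distrib sum_distrib_left[symmetric])
qed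

lemma q_tok_mixture:
  assumes "(\<Sum>i\<in>I. w i) \<noteq> 0"
  shows "(\<Sum>i\<in>I. w i * q_tok \<alpha> \<pi> t l k (\<nu> i))
       = (\<Sum>i\<in>I. w i) * q_tok \<alpha> \<pi> t l k (\<lambda>j. (\<Sum>i\<in>I. w i * \<nu> i j) / (\<Sum>i\<in>I. w i))"
proof -
  have "(\<Sum>i\<in>I. w i * q_tok \<alpha> \<pi> t l k (\<nu> i))
      = \<alpha> t * (\<Sum>i\<in>I. w i * \<nu> i k) + (1 - \<alpha> t) * \<pi> l k * (\<Sum>i\<in>I. w i)"
    unfolding q_tok_def by (simp add: distrib_left sum.distrib sum_distrib_left sum_distrib_right ac_simps)
  also have "\<dots> = (\<Sum>i\<in>I. w i) * q_tok \<alpha> \<pi> t l k (\<lambda>j. (\<Sum>i\<in>I. w i * \<nu> i j) / (\<Sum>i\<in>I. w i))"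
    using assms unfolding q_tok_def by (simp add: field_simps)
  finally show ?thesis .
qed

abbreviation seqs_agreeing :: "nat \<Rightarrow> nat \<Rightarrow> nat \<Rightarrow> (nat \<Rightarrow> nat) \<Rightarrow> (nat \<Rightarrow> nat) set" where
  "seqs_agreeing K L l x \<equiv> {y\<in>seqs K L. \<forall>j\<in>{1..L}-{l}. y j = x j}"

lemma seqs_agreeing_eq_image:
  assumes "x \<in> seqs K L" and "l \<in> {1..L}"
  shows "seqs_agreeing K L l x = (\<lambda>k. x(l := k)) ` {1..K}"
proof (intro equalityI subsetI)
  fix y assume y: "y \<in> seqs_agreeing K L l x"
  have "y = x(l := y l)"
  proof
    fix j show "y j = (x(l := y l)) j"
      using y assms unfolding seqs_def
      by (cases "j = l"; cases "j \<in> {1..L}") (auto simp: PiE_def extensional_def)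
  qed
  moreover have "y l \<in> {1..K}" using y assms(2) unfolding seqs_def by auto
  ultimately show "y \<in> (\<lambda>k. x(l := k)) ` {1..K}" by blast
next
  fix y assume "y \<in> (\<lambda>k. x(l := k)) ` {1..K}"
  then obtain k where k: "k \<in> {1..K}" and y: "y = x(l := k)" by blast
  have "x(l := k) \<in> PiE (insert l {1..L}) (\<lambda>_. {1..K})"
    using assms(1) k unfolding seqs_def by (intro PiE_fun_upd)
  with assms(2) have "y \<in> seqs K L"
    unfolding y seqs_def by (simp add: insert_absorb)
  then show "y \<in> seqs_agreeing K L l x" unfolding y by simp
qed

lemma sum_seqs_agreeing:
  assumes "x \<in> seqs K L" and "l \<in> {1..L}"
  shows "(\<Sum>y\<in>seqs_agreeing K L l x. f y) = (\<Sum>k\<in>{1..K}. f (x(l := k)))"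
proof -
  have "inj_on (\<lambda>k. x(l := k)) {1..K}"
    by (rule inj_onI) (metis fun_upd_same)
  then show ?thesis
    unfolding seqs_agreeing_eq_image[OF assms] by (simp add: sum.reindex)
qed

lemma sum_q_seq_seqs_agreeing:
  assumes "x \<in> seqs K L" and "l \<in> {1..L}" and "x0 l \<in> {1..K}"
    and "(\<Sum>k\<in>{1..K}. \<pi> l k) = 1"
  shows "(\<Sum>y\<in>seqs_agreeing K L l x. q_seq L \<alpha> \<pi> t x0 y)
       = q_seq_except L \<alpha> \<pi> t l x0 x"
proof -
  have "q_seq L \<alpha> \<pi> t x0 (x(l := k)) = q_tok \<alpha> \<pi> t l k (onehot (x0 l)) * q_seq_except L \<alpha> \<pi> t l x0 x"
    for k using q_seq_split[OF assms(2), of "x(l := k)" x] by simp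
  then have "(\<Sum>y\<in>seqs_agreeing K L l x. q_seq L \<alpha> \<pi> t x0 y)
      = (\<Sum>k\<in>{1..K}. q_tok \<alpha> \<pi> t l k (onehot (x0 l)) * q_seq_except L \<alpha> \<pi> t l x0 x)"
    unfolding sum_seqs_agreeing[OF assms(1,2)] by simp
  also have "\<dots> = q_seq_except L \<alpha> \<pi> t l x0 x"
    using sum_q_tok_onehot[where \<pi> = \<pi>, OF assms(3,4)] by (simp add: sum_distrib_right[symmetric])
  finally show ?thesis .
qed

text \<open>The marginal law P(X_t^{-l} = x^{-l}) of the positions other than l.\<close>
definition p_t_except ::
    "nat \<Rightarrow> nat \<Rightarrow> ((nat \<Rightarrow> nat) \<Rightarrow> real) \<Rightarrow> (real \<Rightarrow> real) \<Rightarrow> (nat \<Rightarrow> nat \<Rightarrow> real) \<Rightarrow> real \<Rightarrow> nat \<Rightarrow> (nat \<Rightarrow> nat) \<Rightarrow> real"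
  where "p_t_except K L p0 \<alpha> \<pi> t l x = (\<Sum>x0\<in>seqs K L. p0 x0 * q_seq_except L \<alpha> \<pi> t l x0 x)"

lemma loo_eq_weighted_mean:
  assumes "x \<in> seqs K L" and "l \<in> {1..L}" and "(\<Sum>k\<in>{1..K}. \<pi> l k) = 1"
  shows "loo K L p0 \<alpha> \<pi> t x l
       = (\<lambda>k. (\<Sum>x0\<in>seqs K L. p0 x0 * q_seq_except L \<alpha> \<pi> t l x0 x * onehot (x0 l) k)
             / p_t_except K L p0 \<alpha> \<pi> t l x)"
proof -
  have "(\<Sum>y\<in>seqs_agreeing K L l x. q_seq L \<alpha> \<pi> t x0 y)
      = q_seq_except L \<alpha> \<pi> t l x0 x" if "x0 \<in> seqs K L" for x0
    by (rule sum_q_seq_seqs_agreeing[OF assms(1,2)]) (use that assms in \<open>auto simp: seqs_def\<close>)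
  then have marginal: "(\<Sum>y\<in>seqs_agreeing K L l x. p0 x0 * q_seq L \<alpha> \<pi> t x0 y * c)
      = p0 x0 * q_seq_except L \<alpha> \<pi> t l x0 x * c" if "x0 \<in> seqs K L" for x0 c
    using that by (simp add: sum_distrib_left[symmetric] sum_distrib_right[symmetric])
  show ?thesis
    unfolding loo_def p_t_except_def using marginal[where c = 1] marginal by simp
qed

lemma p_t_eq_sum_q_seq_except:
  assumes "l \<in> {1..L}" and "\<forall>j\<in>{1..L}-{l}. z j = x j"
  shows "p_t K L p0 \<alpha> \<pi> t z
       = (\<Sum>x0\<in>seqs K L. p0 x0 * q_seq_except L \<alpha> \<pi> t l x0 x * q_tok \<alpha> \<pi> t l (z l) (onehot (x0 l)))"
  unfolding p_t_def q_seq_split[OF assms] by (simp add: ac_simps)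

lemma p_t_eq_p_t_except_mult_q_tok_loo:
  assumes "x \<in> seqs K L" and "l \<in> {1..L}" and "(\<Sum>k\<in>{1..K}. \<pi> l k) = 1"
    and "\<forall>j\<in>{1..L}-{l}. z j = x j"
    and "p_t_except K L p0 \<alpha> \<pi> t l x \<noteq> 0"
  shows "p_t K L p0 \<alpha> \<pi> t z = p_t_except K L p0 \<alpha> \<pi> t l x * q_tok \<alpha> \<pi> t l (z l) (loo K L p0 \<alpha> \<pi> t x l)"
  unfolding p_t_eq_sum_q_seq_except[OF assms(2,4)] loo_eq_weighted_mean[where \<pi> = \<pi>, OF assms(1-3)]
  using assms(5) unfolding p_t_except_def by (rule q_tok_mixture)

lemma p_t_except_nonzero:
  assumes "l \<in> {1..L}" and "\<forall>z\<in>seqs K L. 0 \<le> p0 z"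
    and "0 \<le> \<alpha> t" and "\<alpha> t \<le> 1" and "\<forall>j\<in>{1..L}-{l}. 0 \<le> \<pi> j (x j)"
    and "p_t K L p0 \<alpha> \<pi> t x \<noteq> 0"
  shows "p_t_except K L p0 \<alpha> \<pi> t l x \<noteq> 0"
proof
  assume "p_t_except K L p0 \<alpha> \<pi> t l x = 0"
  moreover have "\<forall>x0\<in>seqs K L. 0 \<le> p0 x0 * q_seq_except L \<alpha> \<pi> t l x0 x"
    using assms(2-5) q_seq_except_nonneg by (simp add: zero_le_mult_iff)
  ultimately have "\<forall>x0\<in>seqs K L. p0 x0 * q_seq_except L \<alpha> \<pi> t l x0 x = 0"
    unfolding p_t_except_def by (simp add: sum_nonneg_eq_0_iff[OF finite_seqs])
  then have "p_t K L p0 \<alpha> \<pi> t x = 0"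
    using p_t_eq_sum_q_seq_except[OF assms(1), of x x] by (auto intro!: sum.neutral)
  with assms(6) show False by simp
qed

theorem mainTheorem3:
  fixes K L :: nat and p0 :: "(nat \<Rightarrow> nat) \<Rightarrow> real" and \<alpha> :: "real \<Rightarrow> real"
    and \<pi> :: "nat \<Rightarrow> nat \<Rightarrow> real" and t :: real and l :: nat and x y :: "nat \<Rightarrow> nat"
  assumes K2: "K \<ge> 2" and L1: "L \<ge> 1"
    and p0_nonneg: "\<forall>z\<in>seqs K L. p0 z \<ge> 0"
    and p0_sum: "(\<Sum>z\<in>seqs K L. p0 z) = 1"
    and \<alpha>_range: "\<forall>s\<in>{0..1}. 0 \<le> \<alpha> s \<and> \<alpha> s \<le> 1"
    and \<alpha>_mono: "\<forall>s\<in>{0..1}. \<forall>s'\<in>{0..1}. s \<le> s' \<longrightarrow> \<alpha> s' \<le> \<alpha> s"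
    and \<alpha>0: "\<alpha> 0 = 1"
    and \<pi>_nonneg: "\<forall>j\<in>{1..L}. \<forall>k\<in>{1..K}. \<pi> j k \<ge> 0"
    and \<pi>_sum: "\<forall>j\<in>{1..L}. (\<Sum>k\<in>{1..K}. \<pi> j k) = 1"
    and t: "t \<in> {0..1}"
    and l: "l \<in> {1..L}"
    and x: "x \<in> seqs K L"
    and px: "p_t K L p0 \<alpha> \<pi> t x > 0"
    and y: "y \<in> seqs K L"
    and yx: "\<forall>j\<in>{1..L}-{l}. y j = x j"
  shows "p_t K L p0 \<alpha> \<pi> t y / p_t K L p0 \<alpha> \<pi> t x
       = q_tok \<alpha> \<pi> t l (y l) (loo K L p0 \<alpha> \<pi> t x l)
         / q_tok \<alpha> \<pi> t l (x l) (loo K L p0 \<alpha> \<pi> t x l)"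
proof -
  have \<pi>_sum_l: "(\<Sum>k\<in>{1..K}. \<pi> l k) = 1" using \<pi>_sum l by blast
  have "\<forall>j\<in>{1..L}-{l}. 0 \<le> \<pi> j (x j)"
    using \<pi>_nonneg x unfolding seqs_def by auto
  then have W: "p_t_except K L p0 \<alpha> \<pi> t l x \<noteq> 0"
    using p_t_except_nonzero l p0_nonneg \<alpha>_range t px by auto
  have "p_t K L p0 \<alpha> \<pi> t y = p_t_except K L p0 \<alpha> \<pi> t l x * q_tok \<alpha> \<pi> t l (y l) (loo K L p0 \<alpha> \<pi> t x l)"
    and "p_t K L p0 \<alpha> \<pi> t x = p_t_except K L p0 \<alpha> \<pi> t l x * q_tok \<alpha> \<pi> t l (x l) (loo K L p0 \<alpha> \<pi> t x l)"
    using p_t_eq_p_t_except_mult_q_tok_loo[where \<pi> = \<pi>, OF x l \<pi>_sum_l _ W] yx by auto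
  with W show ?thesis by simp
qed

end
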